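(* Let $V$ be a toroidal vertex algebra, let $K_Y(V)=\{v\in V\mid Y(v;x_0,\mathbf{x})=0\}$ (an ideal of $V$) and $\overline{V}=V/K_Y(V)$, the quotient toroidal vertex algebra. Then $\overline{V}$ is a simple toroidal vertex algebra if and only if $V^0$ is a simple toroidal vertex algebra.
   Context: Fix a positive integer $r$. Write $\mathbf{x}=(x_1,\dots,x_r)$, $\mathbf{x}^{\mathbf{m}}=x_1^{m_1}\cdots x_r^{m_r}$ (similarly for other variables), $\mathbf{z}\mathbf{y}=(z_1y_1,\dots,z_ry_r)$. For a vector space $W$ put $\mathcal{E}(W,r)=\mathrm{Hom}(W,W[[x_1^{\pm1},\dots,x_r^{\pm1}]]((x_0)))$. A toroidal vertex algebra is a vector space $V$ with a linear map $Y(\cdot;x_0,\mathbf{x}):V\to\mathcal{E}(V,r)$, $v\mapsto\sum_{(m_0,\mathbf{m})\in\mathbb{Z}\times\mathbb{Z}^r}v_{m_0,\mathbf{m}}x_0^{-m_0-1}\mathbf{x}^{-\mathbf{m}}$, and a vector $\mathbf{1}$ with $Y(\mathbf{1};x_0,\mathbf{x})v=v$, $Y(v;x_0,\mathbf{x})\mathbf{1}\in V[[x_0,x_1^{\pm1},\dots,x_r^{\pm1}]]$, and the Jacobi identity $$z_0^{-1}\delta\!\left(\tfrac{x_0-y_0}{z_0}\right)Y(u;x_0,\mathbf{z}\mathbf{y})Y(v;y_0,\mathbf{y})-z_0^{-1}\delta\!\left(\tfrac{y_0-x_0}{-z_0}\right)Y(v;y_0,\mathbf{y})Y(u;x_0,\mathbf{z}\mathbf{y})=y_0^{-1}\delta\!\left(\tfrac{x_0-z_0}{y_0}\right)Y(Y(u;z_0,\mathbf{z})v;y_0,\mathbf{y})$$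 for all $u,v$, where $Y(u;x_0,\mathbf{z}\mathbf{y})=\sum u_{m_0,\mathbf{m}}x_0^{-m_0-1}\mathbf{z}^{-\mathbf{m}}\mathbf{y}^{-\mathbf{m}}$. An ideal is a subspace $I$ with $u_{m_0,\mathbf{m}}v\in I$ whenever $u\in I$ or $v\in I$; a toroidal vertex algebra is simple if its only ideals are $0$ and itself. $V^0=\mathrm{span}\{v_{m_0,\mathbf{m}}\mathbf{1}\mid v\in V,(m_0,\mathbf{m})\in\mathbb{Z}\times\mathbb{Z}^r\}$ is a toroidal vertex subalgebra of $V$. *)

theory Defs
  imports "HOL-Analysis.Finite_Cartesian_Product" "HOL-Library.Groups_Big_Fun"
begin

text \<open>A vertex operator is encoded by its modes:
  Y u m0 m v  stands for  u_{m0,m} v, the coefficient of x0^(-m0-1) x^(-m) in Y(u;x0,x) v.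
  Multi-indices in Z^r are elements of int^'r, where the finite index type 'r has r elements.\<close>

definition toroidal_va ::
  "(complex \<Rightarrow> 'v::ab_group_add \<Rightarrow> 'v) \<Rightarrow> 'v set \<Rightarrow>
   ('v \<Rightarrow> int \<Rightarrow> int ^ 'r \<Rightarrow> 'v \<Rightarrow> 'v) \<Rightarrow> 'v \<Rightarrow> bool" where
  "toroidal_va smul S Y vac \<longleftrightarrow>
     vector_space smul \<and> module.subspace smul S \<and> vac \<in> S \<and>
     \<comment> \<open>the modes map S x S into S\<close>
     (\<forall>u\<in>S. \<forall>v\<in>S. \<forall>m0 m. Y u m0 m v \<in> S) \<and>
     \<comment> \<open>Y is linear, and each Y(u;x0,x) is a linear endomorphism of S\<close>
     (\<forall>u\<in>S. \<forall>u'\<in>S. \<forall>v\<in>S. \<forall>m0 m. Y (u + u') m0 m v = Y u m0 m v + Y u' m0 m v) \<and>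
     (\<forall>u\<in>S. \<forall>v\<in>S. \<forall>a m0 m. Y (smul a u) m0 m v = smul a (Y u m0 m v)) \<and>
     (\<forall>u\<in>S. \<forall>v\<in>S. \<forall>v'\<in>S. \<forall>m0 m. Y u m0 m (v + v') = Y u m0 m v + Y u m0 m v') \<and>
     (\<forall>u\<in>S. \<forall>v\<in>S. \<forall>a m0 m. Y u m0 m (smul a v) = smul a (Y u m0 m v)) \<and>
     \<comment> \<open>Y(u;x0,x)v lies in S[[x_1^{\<plusminus>1},...,x_r^{\<plusminus>1}]]((x0))\<close>
     (\<forall>u\<in>S. \<forall>v\<in>S. \<exists>N. \<forall>m0\<ge>N. \<forall>m. Y u m0 m v = 0) \<and>
     \<comment> \<open>vacuum property: Y(1;x0,x)v = v\<close>
     (\<forall>v\<in>S. \<forall>m0 m. Y vac m0 m v = (if m0 = -1 \<and> m = 0 then v else 0)) \<and>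
     \<comment> \<open>creation property: Y(v;x0,x)1 \<in> S[[x0, x_1^{\<plusminus>1},...,x_r^{\<plusminus>1}]]\<close>
     (\<forall>v\<in>S. \<forall>m0 m. m0 \<ge> 0 \<longrightarrow> Y v m0 m vac = 0) \<and>
     \<comment> \<open>Jacobi identity, written out coefficientwise: coefficient of
        z0^(-l-1) x0^(-p-1) y0^(-n-1) z^(-a) y^(-b), applied to w\<close>
     (\<forall>u\<in>S. \<forall>v\<in>S. \<forall>w\<in>S. \<forall>(l::int) (p::int) (n::int) (a::int^'r) (b::int^'r).
        (\<Sum>i. smul ((of_int p :: complex) gchoose i) (Y (Y u (l + int i) a v) (p + n - int i) b w))
        = (\<Sum>i. smul ((-1) ^ i * ((of_int l :: complex) gchoose i))
                 (Y u (l + p - int i) a (Y v (n + int i) (b - a) w)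
                  - smul (of_int ((-1) ^ nat \<bar>l\<bar>)) (Y v (l + n - int i) (b - a) (Y u (p + int i) a w)))))"

definition tva_ideal ::
  "(complex \<Rightarrow> 'v::ab_group_add \<Rightarrow> 'v) \<Rightarrow> 'v set \<Rightarrow>
   ('v \<Rightarrow> int \<Rightarrow> int ^ 'r \<Rightarrow> 'v \<Rightarrow> 'v) \<Rightarrow> 'v set \<Rightarrow> bool" where
  "tva_ideal smul S Y I \<longleftrightarrow>
     module.subspace smul I \<and> I \<subseteq> S \<and>
     (\<forall>u\<in>S. \<forall>v\<in>S. \<forall>m0 m. (u \<in> I \<or> v \<in> I) \<longrightarrow> Y u m0 m v \<in> I)"

definition simple_tva ::
  "(complex \<Rightarrow> 'v::ab_group_add \<Rightarrow> 'v) \<Rightarrow> 'v set \<Rightarrow>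
   ('v \<Rightarrow> int \<Rightarrow> int ^ 'r \<Rightarrow> 'v \<Rightarrow> 'v) \<Rightarrow> 'v \<Rightarrow> bool" where
  "simple_tva smul S Y vac \<longleftrightarrow>
     toroidal_va smul S Y vac \<and> (\<forall>I. tva_ideal smul S Y I \<longrightarrow> I = {0} \<or> I = S)"

definition K_Y :: "'v set \<Rightarrow> ('v \<Rightarrow> int \<Rightarrow> int ^ 'r \<Rightarrow> 'v \<Rightarrow> 'v::zero) \<Rightarrow> 'v set" where
  "K_Y S Y = {v \<in> S. \<forall>m0 m. \<forall>w\<in>S. Y v m0 m w = 0}"

definition V0 ::
  "(complex \<Rightarrow> 'v::ab_group_add \<Rightarrow> 'v) \<Rightarrow> 'v set \<Rightarrow>
   ('v \<Rightarrow> int \<Rightarrow> int ^ 'r \<Rightarrow> 'v \<Rightarrow> 'v) \<Rightarrow> 'v \<Rightarrow> 'v set" where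
  "V0 smul S Y vac = module.span smul {Y v m0 m vac | v m0 m. v \<in> S}"

definition is_quotient_by_KY ::
  "(complex \<Rightarrow> 'v::ab_group_add \<Rightarrow> 'v) \<Rightarrow> 'v set \<Rightarrow>
   ('v \<Rightarrow> int \<Rightarrow> int ^ 'r \<Rightarrow> 'v \<Rightarrow> 'v) \<Rightarrow> 'v \<Rightarrow>
   (complex \<Rightarrow> 'w::ab_group_add \<Rightarrow> 'w) \<Rightarrow> 'w set \<Rightarrow>
   ('w \<Rightarrow> int \<Rightarrow> int ^ 'r \<Rightarrow> 'w \<Rightarrow> 'w) \<Rightarrow> 'w \<Rightarrow> ('v \<Rightarrow> 'w) \<Rightarrow> bool" where
  "is_quotient_by_KY smul S Y vac smulW W YW vacW \<pi> \<longleftrightarrow>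
     toroidal_va smulW W YW vacW \<and>
     \<pi> ` S = W \<and>
     (\<forall>u\<in>S. \<forall>v\<in>S. \<pi> (u + v) = \<pi> u + \<pi> v) \<and>
     (\<forall>u\<in>S. \<forall>a. \<pi> (smul a u) = smulW a (\<pi> u)) \<and>
     \<pi> vac = vacW \<and>
     (\<forall>u\<in>S. \<forall>v\<in>S. \<forall>m0 m. \<pi> (Y u m0 m v) = YW (\<pi> u) m0 m (\<pi> v)) \<and>
     {v \<in> S. \<pi> v = 0} = K_Y S Y"

end

theory Submission
  imports Defs
begin

text \<open>Ideals of V^0 and of the quotient V/K_Y(V) correspond to each other. An ideal J of V^0
  yields the ideal I_J = {v | v_{m0,m} 1 \<in> J} of V; it contains K_Y(V) and meets V^0 exactly in J,
  because every element of V^0 is the (finite) sum of its modes v_{-1,b} 1, which also shows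
  V^0 \<inter> K_Y(V) = 0. Conversely an ideal of V meeting V^0 trivially lies in K_Y(V), since
  Y(v;x0,x) is recovered from the vertex operators of the states v_{-1,m} 1 \<in> V^0. An ideal
  containing the vacuum is everything. That V^0 and I_J are closed under all modes follows from
  the Jacobi identity evaluated on the vacuum, by induction on the mode index.\<close>

lemma (in module) Sum_any_in_subspace:
  assumes "subspace T" and "\<And>i. f i \<in> T"
  shows "Sum_any f \<in> T"
  unfolding Sum_any.expand_set by (rule subspace_sum[OF assms])

lemma (in module) Sum_any_scale:
  assumes "finite {i. f i \<noteq> 0}"
  shows "Sum_any (\<lambda>i. scale c (f i)) = scale c (Sum_any f)"
proof -
  have "Sum_any (\<lambda>i. scale c (f i)) = (\<Sum>i | f i \<noteq> 0. scale c (f i))"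
    by (rule Sum_any.expand_superset) (use assms in auto)
  then show ?thesis by (simp add: Sum_any.expand_set scale_sum_right)
qed

lemma gbinomial_minus_one: "((-1 :: 'a::field_char_0) gchoose k) = (-1) ^ k"
  using gbinomial_negated_upper[of "-1::'a" k] by (simp add: binomial_gbinomial[symmetric])

locale toroidal_vertex_algebra =
  fixes smul :: "complex \<Rightarrow> 'v::ab_group_add \<Rightarrow> 'v"
    and V :: "'v set"
    and Y :: "'v \<Rightarrow> int \<Rightarrow> int ^ 'r \<Rightarrow> 'v \<Rightarrow> 'v"
    and vac :: 'v
  assumes toroidal_va: "toroidal_va smul V Y vac"
begin

sublocale module smul
  using toroidal_va by (simp add: toroidal_va_def module_iff_vector_space)

lemma subspace_V: "subspace V"
  using toroidal_va by (simp add: toroidal_va_def)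

lemma vac_in_V: "vac \<in> V"
  using toroidal_va by (simp add: toroidal_va_def)

lemma Y_closed: "u \<in> V \<Longrightarrow> v \<in> V \<Longrightarrow> Y u m0 m v \<in> V"
  using toroidal_va by (simp add: toroidal_va_def)

lemma Y_add_left: "u \<in> V \<Longrightarrow> u' \<in> V \<Longrightarrow> v \<in> V \<Longrightarrow> Y (u + u') m0 m v = Y u m0 m v + Y u' m0 m v"
  using toroidal_va by (simp add: toroidal_va_def)

lemma Y_scale_left: "u \<in> V \<Longrightarrow> v \<in> V \<Longrightarrow> Y (smul a u) m0 m v = smul a (Y u m0 m v)"
  using toroidal_va by (simp add: toroidal_va_def)

lemma Y_add_right: "u \<in> V \<Longrightarrow> v \<in> V \<Longrightarrow> v' \<in> V \<Longrightarrow> Y u m0 m (v + v') = Y u m0 m v + Y u m0 m v'"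
  using toroidal_va by (simp add: toroidal_va_def)

lemma Y_scale_right: "u \<in> V \<Longrightarrow> v \<in> V \<Longrightarrow> Y u m0 m (smul a v) = smul a (Y u m0 m v)"
  using toroidal_va by (simp add: toroidal_va_def)

lemma Y_truncation: "u \<in> V \<Longrightarrow> v \<in> V \<Longrightarrow> \<exists>N. \<forall>m0\<ge>N. \<forall>m. Y u m0 m v = 0"
  using toroidal_va by (simp add: toroidal_va_def)

lemma Y_vac: "v \<in> V \<Longrightarrow> Y vac m0 m v = (if m0 = -1 \<and> m = 0 then v else 0)"
  using toroidal_va by (simp add: toroidal_va_def)

lemma Y_creation: "v \<in> V \<Longrightarrow> 0 \<le> m0 \<Longrightarrow> Y v m0 m vac = 0"
  using toroidal_va by (simp add: toroidal_va_def)

lemma jacobi: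
  assumes "u \<in> V" and "v \<in> V" and "w \<in> V"
  shows "Sum_any (\<lambda>i. smul ((of_int p :: complex) gchoose i) (Y (Y u (l + int i) a v) (p + n - int i) b w))
    = Sum_any (\<lambda>i. smul ((-1) ^ i * ((of_int l :: complex) gchoose i))
        (Y u (l + p - int i) a (Y v (n + int i) (b - a) w)
         - smul (of_int ((-1) ^ nat \<bar>l\<bar>)) (Y v (l + n - int i) (b - a) (Y u (p + int i) a w))))"
  using toroidal_va assms unfolding toroidal_va_def by blast

lemma zero_in_V: "0 \<in> V"
  using subspace_0[OF subspace_V] .

lemma Y_zero_left: "v \<in> V \<Longrightarrow> Y 0 m0 m v = 0"
  using Y_add_left[OF zero_in_V zero_in_V, of v m0 m] by simp

lemma Y_zero_right: "u \<in> V \<Longrightarrow> Y u m0 m 0 = 0"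
  using Y_add_right[OF _ zero_in_V zero_in_V, of u m0 m] by simp

lemma iterate_on_vac:
  assumes u: "u \<in> V" and y: "y \<in> V"
  shows "Y (Y u l a y) n b vac = Sum_any (\<lambda>i. smul ((-1) ^ i * ((of_int l :: complex) gchoose i))
           (Y u (l - int i) a (Y y (n + int i) (b - a) vac)))"
proof -
  have lhs: "(\<lambda>i. smul ((of_int 0 :: complex) gchoose i) (Y (Y u (l + int i) a y) (0 + n - int i) b vac))
      = (\<lambda>i. if i = 0 then Y (Y u l a y) n b vac else 0)"
    by (simp add: fun_eq_iff gbinomial_0_left)
  have rhs: "(\<lambda>i. smul ((-1) ^ i * ((of_int l :: complex) gchoose i))
        (Y u (l + 0 - int i) a (Y y (n + int i) (b - a) vac)
         - smul (of_int ((-1) ^ nat \<bar>l\<bar>)) (Y y (l + n - int i) (b - a) (Y u (0 + int i) a vac))))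
      = (\<lambda>i. smul ((-1) ^ i * ((of_int l :: complex) gchoose i))
        (Y u (l - int i) a (Y y (n + int i) (b - a) vac)))"
    by (simp add: fun_eq_iff Y_creation[OF u] Y_zero_right[OF y])
  show ?thesis
    using jacobi[OF u y vac_in_V, of 0 l a n b] unfolding lhs rhs by simp
qed

lemma iterate_on_vac_finite:
  assumes u: "u \<in> V" and y: "y \<in> V"
  shows "Y (Y u l a y) n b vac = (\<Sum>i<nat (-n). smul ((-1) ^ i * ((of_int l :: complex) gchoose i))
           (Y u (l - int i) a (Y y (n + int i) (b - a) vac)))"
  unfolding iterate_on_vac[OF u y]
proof (rule Sum_any.expand_superset)
  show "{i. smul ((-1) ^ i * ((of_int l :: complex) gchoose i))
          (Y u (l - int i) a (Y y (n + int i) (b - a) vac)) \<noteq> 0} \<subseteq> {..<nat (- n)}"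
  proof (rule subsetI, rule ccontr)
    fix i assume "i \<in> {i. smul ((-1) ^ i * ((of_int l :: complex) gchoose i))
        (Y u (l - int i) a (Y y (n + int i) (b - a) vac)) \<noteq> 0}" and "i \<notin> {..<nat (-n)}"
    then show False using Y_creation[OF y, of "n + int i"] Y_zero_right[OF u] by simp
  qed
qed simp

lemma Y_creation_mode_minus_one:
  assumes u: "u \<in> V" and w: "w \<in> V"
  shows "Y (Y u (-1) a vac) n a w = Y u n a w"
proof -
  have lhs: "(\<lambda>i. smul ((of_int 0 :: complex) gchoose i) (Y (Y u (-1 + int i) a vac) (0 + n - int i) a w))
      = (\<lambda>i. if i = 0 then Y (Y u (-1) a vac) n a w else 0)"
    by (simp add: fun_eq_iff gbinomial_0_left)
  have sign: "(-1) ^ i * ((of_int (-1) :: complex) gchoose i) = 1" for i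
    by (simp add: gbinomial_minus_one flip: power_mult_distrib)
  \<comment> \<open>only the term with n + i = -1 (for n < 0) resp. -1 + n - i = -1 (for n \<ge> 0) survives\<close>
  have rhs: "(\<lambda>i. smul ((-1) ^ i * ((of_int (-1) :: complex) gchoose i))
        (Y u (-1 + 0 - int i) a (Y vac (n + int i) (a - a) w)
         - smul (of_int ((-1) ^ nat \<bar>-1::int\<bar>)) (Y vac (-1 + n - int i) (a - a) (Y u (0 + int i) a w))))
      = (\<lambda>i. if i = (if n < 0 then nat (-1 - n) else nat n) then Y u n a w else 0)"
    unfolding sign using Y_vac[OF w] Y_vac[OF Y_closed[OF u w]] Y_zero_right[OF u]
    by (auto simp: fun_eq_iff scale_minus_left[of 1, simplified])
  show ?thesis
    using jacobi[OF u vac_in_V w, of 0 "-1" a n a] unfolding lhs rhs by simp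
qed

lemma Y_creation_mode_on_vac:
  assumes u: "u \<in> V"
  shows "Y (Y u l a vac) (-1) b vac = (if b = a then Y u l a vac else 0)"
proof -
  have terms: "(\<lambda>i. smul ((-1) ^ i * ((of_int l :: complex) gchoose i))
           (Y u (l - int i) a (Y vac (-1 + int i) (b - a) vac)))
      = (\<lambda>i. if i = 0 then (if b = a then Y u l a vac else 0) else 0)"
    using Y_vac[OF vac_in_V] Y_zero_right[OF u] by (auto simp: fun_eq_iff)
  show ?thesis
    using iterate_on_vac[OF u vac_in_V, of l a "-1" b] unfolding terms by simp
qed

text \<open>Induction on -n: in the expansion of (u_{c,a} y)_{n,e+a} 1 the term i = 0 is the wanted
  u_{c,a} y_{n,e} 1, and all other terms have a larger index n + i.\<close>

lemma mode_on_state_in_subspace: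
  assumes T: "subspace T" and u: "u \<in> V" and y: "y \<in> V"
    and iterates: "\<And>l n b. Y (Y u l a y) n b vac \<in> T"
  shows "Y u c a (Y y n e vac) \<in> T"
proof (induction "nat (-n)" arbitrary: n c rule: less_induct)
  case less
  show ?case
  proof (cases "0 \<le> n")
    case True
    then show ?thesis using Y_creation[OF y True] Y_zero_right[OF u] subspace_0[OF T] by simp
  next
    case False
    define f where "f i = smul ((-1) ^ i * ((of_int c :: complex) gchoose i))
        (Y u (c - int i) a (Y y (n + int i) e vac))" for i
    have "{..<nat (-n)} = insert 0 {1..<nat (-n)}" using False by auto
    then have "Y (Y u c a y) n (e + a) vac = f 0 + (\<Sum>i\<in>{1..<nat (-n)}. f i)"
      using iterate_on_vac_finite[OF u y, of c a n "e + a"] by (simp add: f_def)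
    moreover have "(\<Sum>i\<in>{1..<nat (-n)}. f i) \<in> T"
    proof (rule subspace_sum[OF T])
      fix i assume "i \<in> {1..<nat (-n)}"
      then have "nat (- (n + int i)) < nat (-n)" using False by auto
      then show "f i \<in> T" unfolding f_def by (intro subspace_scale[OF T] less)
    qed
    ultimately have "f 0 \<in> T"
      using subspace_diff[OF T iterates] by (metis add_diff_cancel_right')
    then show ?thesis by (simp add: f_def)
  qed
qed

text \<open>The Jacobi identity with l = L beyond the truncation order of x on u: its left-hand side
  vanishes and its right-hand side is a finite sum.\<close>

lemma skew_relation_on_vac:
  assumes x: "x \<in> V" and u: "u \<in> V" and trunc: "\<And>m0 m. int L \<le> m0 \<Longrightarrow> Y x m0 m u = 0"
  shows "(\<Sum>i\<le>L. smul ((-1) ^ i * (of_nat L gchoose i))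
      (Y x (int L + p - int i) A (Y u (n + int i) e vac)
       - smul ((-1) ^ L) (Y u (int L + n - int i) e (Y x (p + int i) A vac)))) = 0"
    (is "sum ?h {..L} = 0")
proof -
  have lhs: "(\<lambda>i. smul ((of_int p :: complex) gchoose i)
      (Y (Y x (int L + int i) A u) (p + n - int i) (e + A) vac)) = (\<lambda>i. 0)"
    using trunc Y_zero_left[OF vac_in_V] by (simp add: fun_eq_iff)
  have "Sum_any ?h = sum ?h {..L}"
  proof (rule Sum_any.expand_superset)
    show "{i. ?h i \<noteq> 0} \<subseteq> {..L}"
    proof (rule subsetI, rule ccontr)
      fix i assume "i \<in> {i. ?h i \<noteq> 0}" and "i \<notin> {..L}"
      then show False by (simp add: binomial_eq_0 flip: binomial_gbinomial)
    qed
  qed simp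
  then show ?thesis
    using jacobi[OF x u vac_in_V, of p "int L" A n "e + A"] unfolding lhs by simp
qed

text \<open>Induction on -n via the relation above with p = c - L: its term i = 0 is x_{c,A} u_{n,e} 1
  up to a state of the form u_{q,e} x_{p,A} 1, and its other terms have a larger index n + i.\<close>

lemma swapped_mode_on_state_in_subspace:
  assumes T: "subspace T" and x: "x \<in> V" and u: "u \<in> V"
    and swapped: "\<And>q d c. Y u q d (Y x c A vac) \<in> T"
  shows "Y x c A (Y u n e vac) \<in> T"
proof -
  obtain N where "\<forall>m0\<ge>N. \<forall>m. Y x m0 m u = 0" using Y_truncation[OF x u] by blast
  then obtain L where trunc: "\<And>m0 m. int L \<le> m0 \<Longrightarrow> Y x m0 m u = 0"
    by (metis nat_0_le order_trans linear)
  show ?thesis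
  proof (induction "nat (-n)" arbitrary: n c rule: less_induct)
    case less
    show ?case
    proof (cases "0 \<le> n")
      case True
      then show ?thesis using Y_creation[OF u True] Y_zero_right[OF x] subspace_0[OF T] by simp
    next
      case False
      define p where "p = c - int L"
      define h where "h i = smul ((-1) ^ i * (of_nat L gchoose i))
        (Y x (int L + p - int i) A (Y u (n + int i) e vac)
         - smul ((-1) ^ L) (Y u (int L + n - int i) e (Y x (p + int i) A vac)))" for i
      have "{..L} = insert 0 {1..L}" by auto
      then have "h 0 + (\<Sum>i\<in>{1..L}. h i) = 0"
        using skew_relation_on_vac[where L = L and p = p and A = A and n = n and e = e, OF x u trunc]
        by (simp add: h_def)
      then have "Y x c A (Y u n e vac)
          = smul ((-1) ^ L) (Y u (int L + n) e (Y x p A vac)) - (\<Sum>i\<in>{1..L}. h i)"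
        by (simp add: h_def p_def algebra_simps eq_neg_iff_add_eq_0)
      moreover have "(\<Sum>i\<in>{1..L}. h i) \<in> T"
      proof (rule subspace_sum[OF T])
        fix i assume "i \<in> {1..L}"
        then have "nat (- (n + int i)) < nat (-n)" using False by auto
        then show "h i \<in> T" unfolding h_def
          by (intro subspace_scale[OF T] subspace_diff[OF T] less swapped)
      qed
      ultimately show ?thesis
        by (metis subspace_diff[OF T] subspace_scale[OF T] swapped)
    qed
  qed
qed

lemma creation_mode_in_V0: "v \<in> V \<Longrightarrow> Y v m0 m vac \<in> V0 smul V Y vac"
  unfolding V0_def by (rule span_base) blast

lemma subspace_V0: "subspace (V0 smul V Y vac)"
  unfolding V0_def by (rule subspace_span)

lemma V0_subset_V: "V0 smul V Y vac \<subseteq> V"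
  unfolding V0_def by (rule span_minimal) (use Y_closed vac_in_V subspace_V in auto)

lemma vac_in_V0: "vac \<in> V0 smul V Y vac"
  using creation_mode_in_V0[OF vac_in_V, of "-1" 0] Y_vac[OF vac_in_V] by simp

lemma Y_closed_V0:
  assumes u: "u \<in> V" and v: "v \<in> V0 smul V Y vac"
  shows "Y u c a v \<in> V0 smul V Y vac"
proof -
  have "v \<in> V \<and> (\<forall>c. Y u c a v \<in> V0 smul V Y vac)"
    using v[unfolded V0_def]
  proof (induction rule: span_induct)
    case base
    show ?case
    proof (rule subspaceI)
      show "0 \<in> {v. v \<in> V \<and> (\<forall>c. Y u c a v \<in> V0 smul V Y vac)}"
        using zero_in_V Y_zero_right[OF u] subspace_0[OF subspace_V0] by simp
    next
      fix x y assume "x \<in> {v. v \<in> V \<and> (\<forall>c. Y u c a v \<in> V0 smul V Y vac)}"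
        and "y \<in> {v. v \<in> V \<and> (\<forall>c. Y u c a v \<in> V0 smul V Y vac)}"
      then show "x + y \<in> {v. v \<in> V \<and> (\<forall>c. Y u c a v \<in> V0 smul V Y vac)}"
        using Y_add_right[OF u] subspace_add[OF subspace_V0] subspace_add[OF subspace_V] by auto
    next
      fix k x assume "x \<in> {v. v \<in> V \<and> (\<forall>c. Y u c a v \<in> V0 smul V Y vac)}"
      then show "smul k x \<in> {v. v \<in> V \<and> (\<forall>c. Y u c a v \<in> V0 smul V Y vac)}"
        using Y_scale_right[OF u] subspace_scale[OF subspace_V0] subspace_scale[OF subspace_V] by auto
    qed
  next
    case (step z)
    then obtain y n e where y: "y \<in> V" and z: "z = Y y n e vac" by blast
    have "Y u c a z \<in> V0 smul V Y vac" for c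
      unfolding z by (rule mode_on_state_in_subspace[OF subspace_V0 u y creation_mode_in_V0[OF Y_closed[OF u y]]])
    then show ?case using z Y_closed[OF y vac_in_V] by blast
  qed
  then show ?thesis by blast
qed

lemma toroidal_va_subalgebra:
  assumes "subspace U" and "U \<subseteq> V" and "vac \<in> U"
    and "\<And>u v m0 m. u \<in> U \<Longrightarrow> v \<in> U \<Longrightarrow> Y u m0 m v \<in> U"
  shows "toroidal_va smul U Y vac"
  unfolding toroidal_va_def
proof (intro conjI)
  show "vector_space smul" using toroidal_va by (simp add: toroidal_va_def)
  show "\<forall>u\<in>U. \<forall>v\<in>U. \<forall>w\<in>U. \<forall>l p n a b.
      Sum_any (\<lambda>i. smul ((of_int p :: complex) gchoose i) (Y (Y u (l + int i) a v) (p + n - int i) b w))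
    = Sum_any (\<lambda>i. smul ((-1) ^ i * ((of_int l :: complex) gchoose i))
        (Y u (l + p - int i) a (Y v (n + int i) (b - a) w)
         - smul (of_int ((-1) ^ nat \<bar>l\<bar>)) (Y v (l + n - int i) (b - a) (Y u (p + int i) a w))))"
    using jacobi assms(2) by blast
  show "\<forall>v\<in>U. \<forall>m0 m. Y vac m0 m v = (if m0 = -1 \<and> m = 0 then v else 0)"
    using Y_vac assms(2) by blast
  show "\<forall>v\<in>U. \<forall>m0 m. 0 \<le> m0 \<longrightarrow> Y v m0 m vac = 0"
    using Y_creation assms(2) by blast
qed (meson assms subsetD Y_add_left Y_scale_left Y_add_right Y_scale_right Y_truncation)+

lemma toroidal_va_V0: "toroidal_va smul (V0 smul V Y vac) Y vac"
  using subspace_V0 V0_subset_V vac_in_V0 Y_closed_V0 by (intro toroidal_va_subalgebra) blast+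

definition creation_expandable :: "'v set" where
  "creation_expandable =
    {j \<in> V. finite {b. Y j (-1) b vac \<noteq> 0} \<and> j = Sum_any (\<lambda>b. Y j (-1) b vac)}"

lemma subspace_creation_expandable: "subspace creation_expandable"
proof (rule subspaceI)
  show "0 \<in> creation_expandable"
    unfolding creation_expandable_def using zero_in_V Y_zero_left[OF vac_in_V] by simp
next
  fix x y assume "x \<in> creation_expandable" and "y \<in> creation_expandable"
  then have x: "x \<in> V" "finite {b. Y x (-1) b vac \<noteq> 0}" "x = Sum_any (\<lambda>b. Y x (-1) b vac)"
    and y: "y \<in> V" "finite {b. Y y (-1) b vac \<noteq> 0}" "y = Sum_any (\<lambda>b. Y y (-1) b vac)"
    unfolding creation_expandable_def by auto
  have modes: "Y (x + y) (-1) b vac = Y x (-1) b vac + Y y (-1) b vac" for b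
    by (rule Y_add_left[OF x(1) y(1) vac_in_V])
  have "{b. Y (x + y) (-1) b vac \<noteq> 0} \<subseteq> {b. Y x (-1) b vac \<noteq> 0} \<union> {b. Y y (-1) b vac \<noteq> 0}"
    unfolding modes by auto
  then have "finite {b. Y (x + y) (-1) b vac \<noteq> 0}"
    using x(2) y(2) finite_subset by blast
  moreover have "x + y = Sum_any (\<lambda>b. Y (x + y) (-1) b vac)"
    unfolding modes Sum_any.distrib[OF x(2) y(2)] using x(3) y(3) by simp
  ultimately show "x + y \<in> creation_expandable"
    unfolding creation_expandable_def using subspace_add[OF subspace_V x(1) y(1)] by blast
next
  fix c x assume "x \<in> creation_expandable"
  then have x: "x \<in> V" "finite {b. Y x (-1) b vac \<noteq> 0}" "x = Sum_any (\<lambda>b. Y x (-1) b vac)"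
    unfolding creation_expandable_def by auto
  have modes: "Y (smul c x) (-1) b vac = smul c (Y x (-1) b vac)" for b
    by (rule Y_scale_left[OF x(1) vac_in_V])
  have "finite {b. Y (smul c x) (-1) b vac \<noteq> 0}"
    unfolding modes by (rule finite_subset[OF _ x(2)]) auto
  moreover have "smul c x = Sum_any (\<lambda>b. Y (smul c x) (-1) b vac)"
    unfolding modes Sum_any_scale[OF x(2)] using x(3) by simp
  ultimately show "smul c x \<in> creation_expandable"
    unfolding creation_expandable_def using subspace_scale[OF subspace_V x(1)] by blast
qed

lemma V0_subset_creation_expandable: "V0 smul V Y vac \<subseteq> creation_expandable"
  unfolding V0_def
proof (rule span_minimal[OF _ subspace_creation_expandable], rule subsetI)
  fix z assume "z \<in> {Y v m0 m vac |v m0 m. v \<in> V}"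
  then obtain y n e where y: "y \<in> V" and z: "z = Y y n e vac" by blast
  have "Y z (-1) b vac = (if b = e then z else 0)" for b
    unfolding z by (rule Y_creation_mode_on_vac[OF y])
  then show "z \<in> creation_expandable"
    unfolding creation_expandable_def using z Y_closed[OF y vac_in_V]
    by (simp add: finite_subset[of _ "{e}"])
qed

lemma V0_eq_Sum_any_creation_modes:
  "j \<in> V0 smul V Y vac \<Longrightarrow> j = Sum_any (\<lambda>b. Y j (-1) b vac)"
  using V0_subset_creation_expandable unfolding creation_expandable_def by blast

lemma V0_inter_K_Y: "V0 smul V Y vac \<inter> K_Y V Y = {0}"
proof (intro equalityI subsetI)
  fix j assume j: "j \<in> V0 smul V Y vac \<inter> K_Y V Y"
  then have "Y j (-1) b vac = 0" for b using vac_in_V unfolding K_Y_def by blast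
  moreover have "j = Sum_any (\<lambda>b. Y j (-1) b vac)" using V0_eq_Sum_any_creation_modes j by blast
  ultimately show "j \<in> {0}" by simp
qed (use subspace_0[OF subspace_V0] zero_in_V Y_zero_left in \<open>auto simp: K_Y_def\<close>)

lemma ideal_eq_carrier_if_vac:
  assumes "tva_ideal smul V Y I" and "vac \<in> I"
  shows "I = V"
proof
  show "I \<subseteq> V" using assms(1) unfolding tva_ideal_def by blast
  show "V \<subseteq> I"
  proof
    fix v assume "v \<in> V"
    then have "Y vac (-1) 0 v \<in> I" using assms vac_in_V unfolding tva_ideal_def by blast
    then show "v \<in> I" using Y_vac[OF \<open>v \<in> V\<close>] by simp
  qed
qed

lemma ideal_subset_K_Y_if_inter_V0_zero:
  assumes I: "tva_ideal smul V Y I" and zero: "I \<inter> V0 smul V Y vac = {0}"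
  shows "I \<subseteq> K_Y V Y"
proof
  fix x assume x: "x \<in> I"
  then have xV: "x \<in> V" using I unfolding tva_ideal_def by blast
  have "Y x (-1) m vac \<in> I \<inter> V0 smul V Y vac" for m
    using I x xV vac_in_V creation_mode_in_V0[OF xV] unfolding tva_ideal_def by blast
  then have "Y x m0 m w = 0" if "w \<in> V" for m0 m w
    using Y_creation_mode_minus_one[OF xV that, of m m0] Y_zero_left[OF that] zero by simp
  then show "x \<in> K_Y V Y" unfolding K_Y_def using xV by blast
qed

lemma ideal_inter_V0:
  assumes "tva_ideal smul V Y I"
  shows "tva_ideal smul (V0 smul V Y vac) Y (I \<inter> V0 smul V Y vac)"
  using assms subspace_inter[OF _ subspace_V0] V0_subset_V Y_closed_V0
  unfolding tva_ideal_def by (auto 0 0) blast+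

lemma V0_ideal_absorbs_modes:
  assumes J: "tva_ideal smul (V0 smul V Y vac) Y J" and u: "u \<in> V" and j: "j \<in> J"
  shows "Y u m0 a j \<in> J"
proof -
  have "j \<in> V" using J j V0_subset_V unfolding tva_ideal_def by blast
  moreover have "Y (Y u (-1) a vac) m0 a j \<in> J"
    using J j creation_mode_in_V0[OF u] unfolding tva_ideal_def by blast
  ultimately show ?thesis using Y_creation_mode_minus_one[OF u] by simp
qed

definition creation_ideal :: "'v set \<Rightarrow> 'v set" where
  "creation_ideal J = {x \<in> V. \<forall>m0 m. Y x m0 m vac \<in> J}"

lemma K_Y_subset_creation_ideal: "subspace J \<Longrightarrow> K_Y V Y \<subseteq> creation_ideal J"
  unfolding creation_ideal_def K_Y_def using vac_in_V subspace_0 by auto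

lemma creation_ideal_inter_V0:
  assumes J: "tva_ideal smul (V0 smul V Y vac) Y J"
  shows "creation_ideal J \<inter> V0 smul V Y vac = J"
proof (intro equalityI subsetI)
  fix x assume x: "x \<in> creation_ideal J \<inter> V0 smul V Y vac"
  then have "x = Sum_any (\<lambda>b. Y x (-1) b vac)" using V0_eq_Sum_any_creation_modes by blast
  moreover have "Sum_any (\<lambda>b. Y x (-1) b vac) \<in> J"
    using J x unfolding tva_ideal_def creation_ideal_def by (blast intro: Sum_any_in_subspace)
  ultimately show "x \<in> J" by simp
next
  fix j assume "j \<in> J"
  then show "j \<in> creation_ideal J \<inter> V0 smul V Y vac"
    using J vac_in_V0 V0_subset_V unfolding tva_ideal_def creation_ideal_def by blast
qed

lemma tva_ideal_creation_ideal:
  assumes J: "tva_ideal smul (V0 smul V Y vac) Y J"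
  shows "tva_ideal smul V Y (creation_ideal J)"
  unfolding tva_ideal_def
proof (intro conjI ballI allI impI)
  have Jsub: "subspace J" using J unfolding tva_ideal_def by blast
  show "subspace (creation_ideal J)"
  proof (rule subspaceI)
    show "0 \<in> creation_ideal J"
      unfolding creation_ideal_def using zero_in_V Y_zero_left[OF vac_in_V] subspace_0[OF Jsub] by simp
  next
    fix x y assume "x \<in> creation_ideal J" and "y \<in> creation_ideal J"
    then show "x + y \<in> creation_ideal J" unfolding creation_ideal_def
      using Y_add_left[OF _ _ vac_in_V] subspace_add[OF Jsub] subspace_add[OF subspace_V] by auto
  next
    fix c x assume "x \<in> creation_ideal J"
    then show "smul c x \<in> creation_ideal J" unfolding creation_ideal_def
      using Y_scale_left[OF _ vac_in_V] subspace_scale[OF Jsub] subspace_scale[OF subspace_V] by auto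
  qed
  show "creation_ideal J \<subseteq> V" unfolding creation_ideal_def by blast
  fix u v l a
  assume u: "u \<in> V" and v: "v \<in> V" and uv: "u \<in> creation_ideal J \<or> v \<in> creation_ideal J"
  have term_in_J: "Y u (l - int i) a (Y v (n + int i) (b - a) vac) \<in> J" for i n b
    using uv
  proof
    assume "v \<in> creation_ideal J"
    then show ?thesis
      unfolding creation_ideal_def by (blast intro: V0_ideal_absorbs_modes[OF J u])
  next
    assume "u \<in> creation_ideal J"
    then show ?thesis
      unfolding creation_ideal_def
      by (blast intro: swapped_mode_on_state_in_subspace[OF Jsub u v] V0_ideal_absorbs_modes[OF J v])
  qed
  have "Y (Y u l a v) n b vac \<in> J" for n b
    unfolding iterate_on_vac[OF u v]
    by (intro Sum_any_in_subspace[OF Jsub] subspace_scale[OF Jsub] term_in_J)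
  then show "Y u l a v \<in> creation_ideal J"
    unfolding creation_ideal_def using Y_closed[OF u v] by blast
qed

end

locale toroidal_va_quotient = toroidal_vertex_algebra smul V Y vac
  for smul :: "complex \<Rightarrow> 'v::ab_group_add \<Rightarrow> 'v"
    and V :: "'v set"
    and Y :: "'v \<Rightarrow> int \<Rightarrow> int ^ 'r \<Rightarrow> 'v \<Rightarrow> 'v"
    and vac :: 'v +
  fixes smulW :: "complex \<Rightarrow> 'w::ab_group_add \<Rightarrow> 'w"
    and W :: "'w set"
    and YW :: "'w \<Rightarrow> int \<Rightarrow> int ^ 'r \<Rightarrow> 'w \<Rightarrow> 'w"
    and vacW :: 'w
    and \<pi> :: "'v \<Rightarrow> 'w"
  assumes quotient: "is_quotient_by_KY smul V Y vac smulW W YW vacW \<pi>"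
begin

sublocale W: toroidal_vertex_algebra smulW W YW vacW
  using quotient unfolding is_quotient_by_KY_def by (simp add: toroidal_vertex_algebra_def)

lemma image_V: "\<pi> ` V = W"
  and \<pi>_add: "u \<in> V \<Longrightarrow> v \<in> V \<Longrightarrow> \<pi> (u + v) = \<pi> u + \<pi> v"
  and \<pi>_scale: "u \<in> V \<Longrightarrow> \<pi> (smul c u) = smulW c (\<pi> u)"
  and \<pi>_vac: "\<pi> vac = vacW"
  and \<pi>_Y: "u \<in> V \<Longrightarrow> v \<in> V \<Longrightarrow> \<pi> (Y u m0 m v) = YW (\<pi> u) m0 m (\<pi> v)"
  and \<pi>_eq_0_iff: "v \<in> V \<Longrightarrow> \<pi> v = 0 \<longleftrightarrow> v \<in> K_Y V Y"
  using quotient unfolding is_quotient_by_KY_def by blast+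

lemma \<pi>_0: "\<pi> 0 = 0"
  using \<pi>_add[OF zero_in_V zero_in_V] by simp

lemma preimage_ideal:
  assumes IW: "tva_ideal smulW W YW IW"
  shows "tva_ideal smul V Y {x \<in> V. \<pi> x \<in> IW}"
  unfolding tva_ideal_def
proof (intro conjI ballI allI impI)
  have IWsub: "W.subspace IW" using IW unfolding tva_ideal_def by blast
  show "subspace {x \<in> V. \<pi> x \<in> IW}"
    by (rule subspaceI)
      (use \<pi>_0 \<pi>_add \<pi>_scale zero_in_V W.subspace_0[OF IWsub] W.subspace_add[OF IWsub]
         W.subspace_scale[OF IWsub] subspace_add[OF subspace_V] subspace_scale[OF subspace_V] in auto)
  fix u v m0 m
  assume "u \<in> V" "v \<in> V" "u \<in> {x \<in> V. \<pi> x \<in> IW} \<or> v \<in> {x \<in> V. \<pi> x \<in> IW}"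
  then show "Y u m0 m v \<in> {x \<in> V. \<pi> x \<in> IW}"
    using IW image_V Y_closed \<pi>_Y unfolding tva_ideal_def by auto
qed simp

lemma image_ideal:
  assumes I: "tva_ideal smul V Y I"
  shows "tva_ideal smulW W YW (\<pi> ` I)"
  unfolding tva_ideal_def
proof (intro conjI ballI allI impI)
  have Isub: "subspace I" and IV: "I \<subseteq> V" using I unfolding tva_ideal_def by blast+
  show "W.subspace (\<pi> ` I)"
  proof (rule W.subspaceI)
    show "0 \<in> \<pi> ` I" using \<pi>_0 subspace_0[OF Isub] by force
  next
    fix x y assume "x \<in> \<pi> ` I" "y \<in> \<pi> ` I"
    then show "x + y \<in> \<pi> ` I"
      using \<pi>_add IV subspace_add[OF Isub] by (smt (verit) image_iff subsetD)
  next
    fix c x assume "x \<in> \<pi> ` I"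
    then show "smulW c x \<in> \<pi> ` I"
      using \<pi>_scale IV subspace_scale[OF Isub] by (smt (verit) image_iff subsetD)
  qed
  show "\<pi> ` I \<subseteq> W" using IV image_V by blast
  have lift: "\<exists>x \<in> V. \<pi> x = w \<and> (w \<in> \<pi> ` I \<longrightarrow> x \<in> I)" if "w \<in> W" for w
    using that image_V IV by (cases "w \<in> \<pi> ` I") auto
  fix u v m0 m assume "u \<in> W" "v \<in> W" and uv: "u \<in> \<pi> ` I \<or> v \<in> \<pi> ` I"
  then obtain u' v' where "u' \<in> V" "\<pi> u' = u" "u \<in> \<pi> ` I \<longrightarrow> u' \<in> I"
    and "v' \<in> V" "\<pi> v' = v" "v \<in> \<pi> ` I \<longrightarrow> v' \<in> I"
    using lift by meson
  then show "YW u m0 m v \<in> \<pi> ` I"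
    using I uv \<pi>_Y unfolding tva_ideal_def by (metis imageI)
qed

lemma preimage_image_ideal:
  assumes I: "tva_ideal smul V Y I" and K: "K_Y V Y \<subseteq> I"
  shows "{x \<in> V. \<pi> x \<in> \<pi> ` I} = I"
proof (intro equalityI subsetI)
  have Isub: "subspace I" and IV: "I \<subseteq> V" using I unfolding tva_ideal_def by blast+
  fix x assume "x \<in> {x \<in> V. \<pi> x \<in> \<pi> ` I}"
  then obtain y where x: "x \<in> V" and y: "y \<in> I" "\<pi> x = \<pi> y" by blast
  then have "\<pi> (x - y) = 0" using \<pi>_add[of "x - y" y] IV subspace_diff[OF subspace_V] by auto
  then have "x - y \<in> I" using \<pi>_eq_0_iff K x y IV subspace_diff[OF subspace_V] by blast
  then show "x \<in> I" using subspace_add[OF Isub _ y(1)] by fastforce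
qed (use I in \<open>auto simp: tva_ideal_def\<close>)

lemma simple_V0_if_simple_quotient:
  assumes simple: "simple_tva smulW W YW vacW"
  shows "simple_tva smul (V0 smul V Y vac) Y vac"
  unfolding simple_tva_def
proof (intro conjI allI impI toroidal_va_V0)
  fix J assume J: "tva_ideal smul (V0 smul V Y vac) Y J"
  let ?I = "creation_ideal J"
  have I: "tva_ideal smul V Y ?I" by (rule tva_ideal_creation_ideal[OF J])
  have K: "K_Y V Y \<subseteq> ?I"
    using J by (intro K_Y_subset_creation_ideal) (simp add: tva_ideal_def)
  have "\<pi> ` ?I = {0} \<or> \<pi> ` ?I = W"
    using simple image_ideal[OF I] unfolding simple_tva_def by blast
  then show "J = {0} \<or> J = V0 smul V Y vac"
  proof
    assume "\<pi> ` ?I = {0}"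
    then have "?I = {x \<in> V. \<pi> x = 0}" using preimage_image_ideal[OF I K] by simp
    then have "?I \<subseteq> K_Y V Y" using \<pi>_eq_0_iff by blast
    then have "J \<subseteq> V0 smul V Y vac \<inter> K_Y V Y" using creation_ideal_inter_V0[OF J] by blast
    then have "J \<subseteq> {0}" unfolding V0_inter_K_Y .
    moreover have "0 \<in> J" using J subspace_0 unfolding tva_ideal_def by blast
    ultimately show ?thesis by blast
  next
    assume "\<pi> ` ?I = W"
    then have "vac \<in> {x \<in> V. \<pi> x \<in> \<pi> ` ?I}" using vac_in_V \<pi>_vac W.vac_in_V by simp
    then have "vac \<in> ?I" unfolding preimage_image_ideal[OF I K] .
    then have "?I = V" by (rule ideal_eq_carrier_if_vac[OF I])
    then show ?thesis using creation_ideal_inter_V0[OF J] by (simp add: Int_absorb1 V0_subset_V)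
  qed
qed

lemma simple_quotient_if_simple_V0:
  assumes simple: "simple_tva smul (V0 smul V Y vac) Y vac"
  shows "simple_tva smulW W YW vacW"
  unfolding simple_tva_def
proof (intro conjI allI impI W.toroidal_va)
  fix IW assume IW: "tva_ideal smulW W YW IW"
  let ?I = "{x \<in> V. \<pi> x \<in> IW}"
  have I: "tva_ideal smul V Y ?I" by (rule preimage_ideal[OF IW])
  have "IW \<subseteq> W" using IW unfolding tva_ideal_def by blast
  then have image: "\<pi> ` ?I = IW" using image_V by auto
  have "?I \<inter> V0 smul V Y vac = {0} \<or> ?I \<inter> V0 smul V Y vac = V0 smul V Y vac"
    using simple ideal_inter_V0[OF I] unfolding simple_tva_def by blast
  then show "IW = {0} \<or> IW = W"
  proof
    assume "?I \<inter> V0 smul V Y vac = {0}"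
    then have "?I \<subseteq> K_Y V Y" by (rule ideal_subset_K_Y_if_inter_V0_zero[OF I])
    then have "\<pi> ` ?I \<subseteq> {0}" using \<pi>_eq_0_iff by blast
    then have "IW \<subseteq> {0}" using image by simp
    moreover have "0 \<in> IW" using IW W.subspace_0 unfolding tva_ideal_def by blast
    ultimately show ?thesis by blast
  next
    assume "?I \<inter> V0 smul V Y vac = V0 smul V Y vac"
    then have "vac \<in> ?I" using vac_in_V0 by blast
    then have "vacW \<in> IW" using \<pi>_vac by simp
    then show ?thesis using W.ideal_eq_carrier_if_vac[OF IW] by simp
  qed
qed

end

theorem proposition2p23:
  fixes smul :: "complex \<Rightarrow> 'v::ab_group_add \<Rightarrow> 'v"
    and V :: "'v set"
    and Y :: "'v \<Rightarrow> int \<Rightarrow> int ^ 'r \<Rightarrow> 'v \<Rightarrow> 'v"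
    and vac :: 'v
    and smulW :: "complex \<Rightarrow> 'w::ab_group_add \<Rightarrow> 'w"
    and W :: "'w set"
    and YW :: "'w \<Rightarrow> int \<Rightarrow> int ^ 'r \<Rightarrow> 'w \<Rightarrow> 'w"
    and vacW :: 'w
    and \<pi> :: "'v \<Rightarrow> 'w"
  assumes "toroidal_va smul V Y vac"
    and "is_quotient_by_KY smul V Y vac smulW W YW vacW \<pi>"
  shows "simple_tva smulW W YW vacW \<longleftrightarrow> simple_tva smul (V0 smul V Y vac) Y vac"
proof -
  interpret toroidal_va_quotient smul V Y vac smulW W YW vacW \<pi>
    using assms by (simp add: toroidal_va_quotient_def toroidal_vertex_algebra_def
        toroidal_va_quotient_axioms_def)
  show ?thesis using simple_V0_if_simple_quotient simple_quotient_if_simple_V0 by blast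
qed

end
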